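(* Let $e$ be a series-rational expression. One can obtain a fork-acyclic and finite pomset automaton $A$ with a state $q$ such that $L_A(q)=[\![e]\!]$.
   Context: Fix a finite alphabet $\Sigma$. Pomsets are isomorphism classes of finite labelled posets over $\Sigma$; $1$ is the empty pomset; sequential composition $U\cdot V$ is the disjoint union with all elements of $U$ below all elements of $V$; parallel composition $U\parallel V$ is the disjoint union of orders. $\mathsf{SP}(\Sigma)$ is the smallest set containing $1$ and the one-element pomsets $a\in\Sigma$ closed under $\cdot,\parallel$. These lift pointwise to sets of pomsets, and $L^*=\bigcup_n L^n$ with $L^0=\{1\}$, $L^{n+1}=L\cdot L^n$. Series-rational expressions are generated by $e,f::=0\mid 1\mid a\in\Sigma\mid e+f\mid e\cdot f\mid e\parallel f\mid e^*$, with semantics $[\![0]\!]=\emptyset$, $[\![1]\!]=\{1\}$, $[\![a]\!]=\{a\}$, $[\![e+f]\!]=[\![e]\!]\cup[\![f]\!]$, $[\![e\cdot f]\!]=[\![e]\!]\cdot[\![f]\!]$, $[\![e\parallel f]\!]=[\![e]\!]\parallel[\![f]\!]$, $[\![e^*]\!]=[\![e]\!]^*$. A pomset automaton is $A=\langle Q,F,\delta,\gamma\rangle$ with $F\subseteq Q$, $\delta:Q\times\Sigma\to2^Q$, $\gamma:Q\times\mathbb{M}(Q)\to2^Q$ ($\mathbb{M}(Q)$ finite multisets over $Q$), each $q$ having finitely many $\phi$ with $\gamma(q,\phi)\ne\emptyset$; it is finite if $Q$ is finite. The run relation $\to_A$ is the smallest relation with: $q\xrightarrow{1}_A q$; $q\xrightarrow{a}_A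 q'$ if $q'\in\delta(q,a)$; $q\xrightarrow{U\cdot V}_A q'$ if $q\xrightarrow{U}_A q''\xrightarrow{V}_A q'$; $q\xrightarrow{U_1\parallel\cdots\parallel U_n}_A q'$ if $q'\in\gamma(q,\{\!|q_1,\dots,q_n|\!\})$ and each $q_i\xrightarrow{U_i}_A q_i'$ for some $q_i'\in F$. $L_A(q)=\{U\mid\exists q'\in F.\ q\xrightarrow{U}_A q'\}$. The support relation $\preceq_A$ is the smallest preorder with $q'\preceq_A q$ whenever $q'\in\delta(q,a)$, or $q'\in\gamma(q,\phi)$, or $q'\in\phi$ with $\gamma(q,\phi)\ne\emptyset$; $A$ is fork-acyclic if $r\in\phi$ and $\gamma(q,\phi)\ne\emptyset$ imply $q\not\preceq_A r$. *)

theory Defs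
  imports Main "HOL-Library.Multiset"
begin

text \<open>A finite labelled poset is represented concretely by a carrier (a finite set of
natural numbers), a partial order on the carrier, and a labelling function (only its
values on the carrier matter).\<close>

type_synonym 'a lposet = "nat set \<times> (nat \<times> nat) set \<times> (nat \<Rightarrow> 'a)"

definition wf_lposet :: "'a lposet \<Rightarrow> bool" where
  "wf_lposet P = (case P of (V, R, l) \<Rightarrow>
     finite V \<and> R \<subseteq> V \<times> V \<and> refl_on V R \<and> antisym R \<and> trans R)"

definition iso_lposet :: "'a lposet \<Rightarrow> 'a lposet \<Rightarrow> bool" where
  "iso_lposet P Q = (case P of (V, R, l) \<Rightarrow> case Q of (W, S, m) \<Rightarrow>
     (\<exists>f. bij_betw f V W \<and> (\<forall>x\<in>V. \<forall>y\<in>V. (x, y) \<in> R \<longleftrightarrow> (f x, f y) \<in> S)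
          \<and> (\<forall>x\<in>V. m (f x) = l x)))"

definition iso_class :: "'a lposet \<Rightarrow> 'a lposet set" where
  "iso_class P = {Q. wf_lposet Q \<and> iso_lposet P Q}"

typedef 'a pomset = "{C :: 'a lposet set. \<exists>P. wf_lposet P \<and> C = iso_class P}"
proof
  show "iso_class ({}, {}, (\<lambda>_. undefined)) \<in> {C :: 'a lposet set. \<exists>P. wf_lposet P \<and> C = iso_class P}"
    by (auto simp: wf_lposet_def refl_on_def antisym_def trans_def)
qed

definition pomset_of :: "'a lposet \<Rightarrow> 'a pomset" where
  "pomset_of P = Abs_pomset (iso_class P)"

definition rep_lposet :: "'a pomset \<Rightarrow> 'a lposet" where
  "rep_lposet U = (SOME P. P \<in> Rep_pomset U)"

definition disj_union :: "bool \<Rightarrow> 'a lposet \<Rightarrow> 'a lposet \<Rightarrow> 'a lposet" where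
  "disj_union below P Q = (case P of (V, R, l) \<Rightarrow> case Q of (W, S, m) \<Rightarrow>
     ((\<lambda>x. 2 * x) ` V \<union> (\<lambda>x. 2 * x + 1) ` W,
      {(2 * x, 2 * y) | x y. (x, y) \<in> R} \<union> {(2 * x + 1, 2 * y + 1) | x y. (x, y) \<in> S}
        \<union> (if below then {(2 * x, 2 * y + 1) | x y. x \<in> V \<and> y \<in> W} else {}),
      (\<lambda>n. if even n then l (n div 2) else m (n div 2))))"

definition pom_one :: "'a pomset" where
  "pom_one = pomset_of ({}, {}, (\<lambda>_. undefined))"

definition pom_atom :: "'a \<Rightarrow> 'a pomset" where
  "pom_atom a = pomset_of ({0}, {(0, 0)}, (\<lambda>_. a))"

definition pom_seq :: "'a pomset \<Rightarrow> 'a pomset \<Rightarrow> 'a pomset" where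
  "pom_seq U V = pomset_of (disj_union True (rep_lposet U) (rep_lposet V))"

definition pom_par :: "'a pomset \<Rightarrow> 'a pomset \<Rightarrow> 'a pomset" where
  "pom_par U V = pomset_of (disj_union False (rep_lposet U) (rep_lposet V))"

definition pom_par_list :: "'a pomset list \<Rightarrow> 'a pomset" where
  "pom_par_list Us = foldr pom_par Us pom_one"

definition lang_seq :: "'a pomset set \<Rightarrow> 'a pomset set \<Rightarrow> 'a pomset set" where
  "lang_seq L M = {pom_seq U V | U V. U \<in> L \<and> V \<in> M}"

definition lang_par :: "'a pomset set \<Rightarrow> 'a pomset set \<Rightarrow> 'a pomset set" where
  "lang_par L M = {pom_par U V | U V. U \<in> L \<and> V \<in> M}"

fun lang_pow :: "'a pomset set \<Rightarrow> nat \<Rightarrow> 'a pomset set" where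
  "lang_pow L 0 = {pom_one}"
| "lang_pow L (Suc n) = lang_seq L (lang_pow L n)"

definition lang_star :: "'a pomset set \<Rightarrow> 'a pomset set" where
  "lang_star L = (\<Union>n. lang_pow L n)"

datatype 'a sr_exp =
    SZero
  | SOne
  | SSym 'a
  | SPlus "'a sr_exp" "'a sr_exp"
  | SSeq "'a sr_exp" "'a sr_exp"
  | SPar "'a sr_exp" "'a sr_exp"
  | SStar "'a sr_exp"

fun sem :: "'a sr_exp \<Rightarrow> 'a pomset set" where
  "sem SZero = {}"
| "sem SOne = {pom_one}"
| "sem (SSym a) = {pom_atom a}"
| "sem (SPlus e f) = sem e \<union> sem f"
| "sem (SSeq e f) = lang_seq (sem e) (sem f)"
| "sem (SPar e f) = lang_par (sem e) (sem f)"
| "sem (SStar e) = lang_star (sem e)"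

record ('s, 'a) pomset_automaton =
  states :: "'s set"
  accepting :: "'s set"
  delta :: "'s \<Rightarrow> 'a \<Rightarrow> 's set"
  gamma :: "'s \<Rightarrow> 's multiset \<Rightarrow> 's set"

definition wf_pa :: "('s, 'a) pomset_automaton \<Rightarrow> bool" where
  "wf_pa A \<longleftrightarrow>
     accepting A \<subseteq> states A
   \<and> (\<forall>q a. delta A q a \<subseteq> states A \<and> (q \<notin> states A \<longrightarrow> delta A q a = {}))
   \<and> (\<forall>q \<phi>. gamma A q \<phi> \<subseteq> states A
        \<and> (gamma A q \<phi> \<noteq> {} \<longrightarrow> q \<in> states A \<and> set_mset \<phi> \<subseteq> states A))
   \<and> (\<forall>q. finite {\<phi>. gamma A q \<phi> \<noteq> {}})"

definition finite_pa :: "('s, 'a) pomset_automaton \<Rightarrow> bool" where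
  "finite_pa A \<longleftrightarrow> finite (states A)"

inductive run :: "('s, 'a) pomset_automaton \<Rightarrow> 's \<Rightarrow> 'a pomset \<Rightarrow> 's \<Rightarrow> bool"
  for A where
  run_one: "run A q pom_one q"
| run_atom: "q' \<in> delta A q a \<Longrightarrow> run A q (pom_atom a) q'"
| run_seq: "run A q U q'' \<Longrightarrow> run A q'' V q' \<Longrightarrow> run A q (pom_seq U V) q'"
| run_par: "q' \<in> gamma A q (mset (map fst xs)) \<Longrightarrow>
            (\<forall>(qi, Ui) \<in> set xs. \<exists>qf \<in> accepting A. run A qi Ui qf) \<Longrightarrow>
            run A q (pom_par_list (map snd xs)) q'"

definition lang_pa :: "('s, 'a) pomset_automaton \<Rightarrow> 's \<Rightarrow> 'a pomset set" where
  "lang_pa A q = {U. \<exists>q' \<in> accepting A. run A q U q'}"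

definition support_step :: "('s, 'a) pomset_automaton \<Rightarrow> 's \<Rightarrow> 's \<Rightarrow> bool" where
  "support_step A q' q \<longleftrightarrow>
     (\<exists>a. q' \<in> delta A q a) \<or> (\<exists>\<phi>. q' \<in> gamma A q \<phi>) \<or> (\<exists>\<phi>. q' \<in># \<phi> \<and> gamma A q \<phi> \<noteq> {})"

definition supports :: "('s, 'a) pomset_automaton \<Rightarrow> 's \<Rightarrow> 's \<Rightarrow> bool" where
  "supports A = (support_step A)\<^sup>*\<^sup>*"

definition fork_acyclic :: "('s, 'a) pomset_automaton \<Rightarrow> bool" where
  "fork_acyclic A \<longleftrightarrow> (\<forall>q \<phi> r. r \<in># \<phi> \<and> gamma A q \<phi> \<noteq> {} \<longrightarrow> \<not> supports A q r)"

end

theory Submission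
  imports Defs "HOL-Library.Nat_Bijection"
begin

(* A Thompson-style construction.  Every position p of e (a path in its syntax tree) owns the
   three states (p, 0), (p, 1), (p, 2), encoded as the numbers pos_state p i, of which (p, 0) is
   initial.  The transitions of a position implement its top-level operator, and sub-expressions
   are reached only through forks that call the initial state of a child position; by induction
   on the sub-expression, (p, 0) accepts exactly the semantics of the sub-expression at p.  Forks
   go exactly one level deeper while all other transitions stay at the same position, so the
   support relation never reaches a shallower position, and no state can support a state it
   forks to. *)

section \<open>Algebra of pomsets\<close>

definition lp_car :: "'a lposet \<Rightarrow> nat set" where "lp_car P = fst P"
definition lp_ord :: "'a lposet \<Rightarrow> (nat \<times> nat) set" where "lp_ord P = fst (snd P)"
definition lp_lab :: "'a lposet \<Rightarrow> nat \<Rightarrow> 'a" where "lp_lab P = snd (snd P)"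

definition inl_pos :: "nat \<Rightarrow> nat" where "inl_pos x = 2 * x"
definition inr_pos :: "nat \<Rightarrow> nat" where "inr_pos x = 2 * x + 1"

lemma inl_pos_eq_iff [simp]: "inl_pos x = inl_pos y \<longleftrightarrow> x = y"
  and inr_pos_eq_iff [simp]: "inr_pos x = inr_pos y \<longleftrightarrow> x = y"
  and inl_pos_neq_inr_pos [simp]: "inl_pos x \<noteq> inr_pos y" "inr_pos y \<noteq> inl_pos x"
  by (auto simp: inl_pos_def inr_pos_def) presburger+

lemma inl_pos_div_2 [simp]: "inl_pos x div 2 = x"
  and inr_pos_div_2 [simp]: "inr_pos x div 2 = x"
  by (auto simp: inl_pos_def inr_pos_def)

lemma wf_lposet_iff:
  "wf_lposet P \<longleftrightarrow> finite (lp_car P) \<and> lp_ord P \<subseteq> lp_car P \<times> lp_car P \<and>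
     refl_on (lp_car P) (lp_ord P) \<and> antisym (lp_ord P) \<and> trans (lp_ord P)"
  by (cases P) (auto simp: wf_lposet_def lp_car_def lp_ord_def)

lemma iso_lposet_iff:
  "iso_lposet P Q \<longleftrightarrow> (\<exists>f. bij_betw f (lp_car P) (lp_car Q) \<and>
     (\<forall>x\<in>lp_car P. \<forall>y\<in>lp_car P. (x, y) \<in> lp_ord P \<longleftrightarrow> (f x, f y) \<in> lp_ord Q) \<and>
     (\<forall>x\<in>lp_car P. lp_lab Q (f x) = lp_lab P x))"
  by (cases P; cases Q) (auto simp: iso_lposet_def lp_car_def lp_ord_def lp_lab_def)

lemma iso_lposetI:
  assumes "inj_on f (lp_car P)" "f ` lp_car P = lp_car Q"
    and "\<And>x y. x \<in> lp_car P \<Longrightarrow> y \<in> lp_car P \<Longrightarrow> (x, y) \<in> lp_ord P \<longleftrightarrow> (f x, f y) \<in> lp_ord Q"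
    and "\<And>x. x \<in> lp_car P \<Longrightarrow> lp_lab Q (f x) = lp_lab P x"
  shows "iso_lposet P Q"
  unfolding iso_lposet_iff bij_betw_def using assms by blast

lemma iso_lposetE:
  assumes "iso_lposet P Q"
  obtains f where "bij_betw f (lp_car P) (lp_car Q)"
    "\<And>x y. x \<in> lp_car P \<Longrightarrow> y \<in> lp_car P \<Longrightarrow> (x, y) \<in> lp_ord P \<longleftrightarrow> (f x, f y) \<in> lp_ord Q"
    "\<And>x. x \<in> lp_car P \<Longrightarrow> lp_lab Q (f x) = lp_lab P x"
  using assms that unfolding iso_lposet_iff by blast

lemma iso_lposet_refl: "iso_lposet P P"
  by (rule iso_lposetI[of id]) auto

lemma iso_lposet_sym:
  assumes "iso_lposet P Q"
  shows "iso_lposet Q P"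
proof -
  obtain f where f: "bij_betw f (lp_car P) (lp_car Q)"
    and ord: "\<And>x y. x \<in> lp_car P \<Longrightarrow> y \<in> lp_car P \<Longrightarrow> (x, y) \<in> lp_ord P \<longleftrightarrow> (f x, f y) \<in> lp_ord Q"
    and lab: "\<And>x. x \<in> lp_car P \<Longrightarrow> lp_lab Q (f x) = lp_lab P x"
    using assms by (elim iso_lposetE) blast
  define g where "g = inv_into (lp_car P) f"
  have g: "bij_betw g (lp_car Q) (lp_car P)"
    using f by (simp add: g_def bij_betw_inv_into)
  have fg: "f (g y) = y" and gy: "g y \<in> lp_car P" if "y \<in> lp_car Q" for y
    using f that g by (auto simp: g_def bij_betw_inv_into_right dest: bij_betwE)
  show ?thesis
  proof (rule iso_lposetI[of g])
    fix x assume "x \<in> lp_car Q"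
    then show "lp_lab P (g x) = lp_lab Q x"
      using lab[of "g x"] fg gy by simp
  qed (use g ord fg gy in \<open>auto simp: bij_betw_def\<close>)
qed

lemma iso_lposet_trans:
  assumes "iso_lposet P Q" "iso_lposet Q R"
  shows "iso_lposet P R"
proof -
  obtain f where f: "bij_betw f (lp_car P) (lp_car Q)"
    and ordf: "\<And>x y. x \<in> lp_car P \<Longrightarrow> y \<in> lp_car P \<Longrightarrow> (x, y) \<in> lp_ord P \<longleftrightarrow> (f x, f y) \<in> lp_ord Q"
    and labf: "\<And>x. x \<in> lp_car P \<Longrightarrow> lp_lab Q (f x) = lp_lab P x"
    using assms(1) by (elim iso_lposetE) blast
  obtain g where g: "bij_betw g (lp_car Q) (lp_car R)"
    and ordg: "\<And>x y. x \<in> lp_car Q \<Longrightarrow> y \<in> lp_car Q \<Longrightarrow> (x, y) \<in> lp_ord Q \<longleftrightarrow> (g x, g y) \<in> lp_ord R"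
    and labg: "\<And>x. x \<in> lp_car Q \<Longrightarrow> lp_lab R (g x) = lp_lab Q x"
    using assms(2) by (elim iso_lposetE) blast
  have "f x \<in> lp_car Q" if "x \<in> lp_car P" for x
    using f that by (rule bij_betw_apply)
  then show ?thesis
    using bij_betw_trans[OF f g] ordf ordg labf labg
    by (intro iso_lposetI[of "g \<circ> f"]) (auto simp: bij_betw_def)
qed

lemma pomset_of_eq_iff:
  assumes "wf_lposet P" "wf_lposet Q"
  shows "pomset_of P = pomset_of Q \<longleftrightarrow> iso_lposet P Q"
proof -
  have "iso_class P = iso_class Q \<longleftrightarrow> iso_lposet P Q"
    using assms iso_lposet_refl iso_lposet_sym iso_lposet_trans
    unfolding iso_class_def by blast
  moreover have "iso_class P \<in> {C. \<exists>P. wf_lposet P \<and> C = iso_class P}"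
    "iso_class Q \<in> {C. \<exists>P. wf_lposet P \<and> C = iso_class P}"
    using assms by blast+
  ultimately show ?thesis
    using assms by (simp add: pomset_of_def Abs_pomset_inject)
qed

lemma wf_rep_lposet [simp]: "wf_lposet (rep_lposet U)"
  and pomset_of_rep_lposet [simp]: "pomset_of (rep_lposet U) = U"
proof -
  obtain P where P: "wf_lposet P" "Rep_pomset U = iso_class P"
    using Rep_pomset[of U] by auto
  have "P \<in> Rep_pomset U"
    using P iso_lposet_refl by (simp add: iso_class_def)
  then have "rep_lposet U \<in> Rep_pomset U"
    unfolding rep_lposet_def by (rule someI)
  then have wf: "wf_lposet (rep_lposet U)" and iso: "iso_lposet P (rep_lposet U)"
    using P by (auto simp: iso_class_def)
  show "wf_lposet (rep_lposet U)"
    by (fact wf)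
  have "pomset_of (rep_lposet U) = pomset_of P"
    using wf iso P(1) iso_lposet_sym pomset_of_eq_iff by blast
  also have "\<dots> = U"
    using P by (metis Rep_pomset_inverse pomset_of_def)
  finally show "pomset_of (rep_lposet U) = U" .
qed

lemma lp_car_disj_union: "lp_car (disj_union b P Q) = inl_pos ` lp_car P \<union> inr_pos ` lp_car Q"
  by (cases P; cases Q) (simp add: disj_union_def lp_car_def inl_pos_def[abs_def] inr_pos_def[abs_def])

lemma lp_ord_disj_union:
  "lp_ord (disj_union b P Q) =
     {(inl_pos x, inl_pos y) |x y. (x, y) \<in> lp_ord P} \<union> {(inr_pos x, inr_pos y) |x y. (x, y) \<in> lp_ord Q}
     \<union> (if b then {(inl_pos x, inr_pos y) |x y. x \<in> lp_car P \<and> y \<in> lp_car Q} else {})"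
  by (cases P; cases Q) (simp add: disj_union_def lp_car_def lp_ord_def inl_pos_def inr_pos_def)

lemma lp_lab_disj_union [simp]:
  "lp_lab (disj_union b P Q) (inl_pos x) = lp_lab P x"
  "lp_lab (disj_union b P Q) (inr_pos x) = lp_lab Q x"
  by (cases P; cases Q; simp add: disj_union_def lp_lab_def inl_pos_def inr_pos_def)+

lemma mem_lp_car_disj_union [simp]:
  "inl_pos x \<in> lp_car (disj_union b P Q) \<longleftrightarrow> x \<in> lp_car P"
  "inr_pos x \<in> lp_car (disj_union b P Q) \<longleftrightarrow> x \<in> lp_car Q"
  by (auto simp: lp_car_disj_union)

lemma mem_lp_ord_disj_union [simp]:
  "(inl_pos x, inl_pos y) \<in> lp_ord (disj_union b P Q) \<longleftrightarrow> (x, y) \<in> lp_ord P"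
  "(inr_pos x, inr_pos y) \<in> lp_ord (disj_union b P Q) \<longleftrightarrow> (x, y) \<in> lp_ord Q"
  "(inl_pos x, inr_pos y) \<in> lp_ord (disj_union b P Q) \<longleftrightarrow> b \<and> x \<in> lp_car P \<and> y \<in> lp_car Q"
  "(inr_pos x, inl_pos y) \<notin> lp_ord (disj_union b P Q)"
  by (auto simp: lp_ord_disj_union)

lemma lp_car_disj_unionE:
  assumes "n \<in> lp_car (disj_union b P Q)"
  obtains x where "n = inl_pos x" "x \<in> lp_car P" | x where "n = inr_pos x" "x \<in> lp_car Q"
  using assms by (auto simp: lp_car_disj_union)

lemma lp_ord_disj_unionE:
  assumes "(n, k) \<in> lp_ord (disj_union b P Q)"
  obtains x y where "n = inl_pos x" "k = inl_pos y" "(x, y) \<in> lp_ord P"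
    | x y where "n = inr_pos x" "k = inr_pos y" "(x, y) \<in> lp_ord Q"
    | x y where "n = inl_pos x" "k = inr_pos y" "b" "x \<in> lp_car P" "y \<in> lp_car Q"
  using assms by (auto simp: lp_ord_disj_union split: if_splits)

lemma wf_disj_union:
  assumes "wf_lposet P" "wf_lposet Q"
  shows "wf_lposet (disj_union b P Q)"
  unfolding wf_lposet_iff
proof (intro conjI)
  show "finite (lp_car (disj_union b P Q))"
    using assms by (simp add: lp_car_disj_union wf_lposet_iff)
  show "lp_ord (disj_union b P Q) \<subseteq> lp_car (disj_union b P Q) \<times> lp_car (disj_union b P Q)"
    using assms unfolding wf_lposet_iff by (auto elim!: lp_ord_disj_unionE)
  show "refl_on (lp_car (disj_union b P Q)) (lp_ord (disj_union b P Q))"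
    using assms unfolding wf_lposet_iff refl_on_def by (auto elim!: lp_car_disj_unionE)
  show "antisym (lp_ord (disj_union b P Q))"
    using assms unfolding wf_lposet_iff antisym_def by (auto elim!: lp_ord_disj_unionE)
  show "trans (lp_ord (disj_union b P Q))"
    unfolding trans_def
  proof (intro allI impI)
    fix x y z
    assume "(x, y) \<in> lp_ord (disj_union b P Q)" "(y, z) \<in> lp_ord (disj_union b P Q)"
    then show "(x, z) \<in> lp_ord (disj_union b P Q)"
      using assms unfolding wf_lposet_iff trans_def by (auto elim!: lp_ord_disj_unionE)
  qed
qed

lemma iso_disj_union:
  assumes "iso_lposet P P'" "iso_lposet Q Q'"
  shows "iso_lposet (disj_union b P Q) (disj_union b P' Q')"
proof -
  obtain f where f: "bij_betw f (lp_car P) (lp_car P')"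
    and ordf: "\<And>x y. x \<in> lp_car P \<Longrightarrow> y \<in> lp_car P \<Longrightarrow> (x, y) \<in> lp_ord P \<longleftrightarrow> (f x, f y) \<in> lp_ord P'"
    and labf: "\<And>x. x \<in> lp_car P \<Longrightarrow> lp_lab P' (f x) = lp_lab P x"
    using assms(1) by (elim iso_lposetE) blast
  obtain g where g: "bij_betw g (lp_car Q) (lp_car Q')"
    and ordg: "\<And>x y. x \<in> lp_car Q \<Longrightarrow> y \<in> lp_car Q \<Longrightarrow> (x, y) \<in> lp_ord Q \<longleftrightarrow> (g x, g y) \<in> lp_ord Q'"
    and labg: "\<And>x. x \<in> lp_car Q \<Longrightarrow> lp_lab Q' (g x) = lp_lab Q x"
    using assms(2) by (elim iso_lposetE) blast
  define h where "h n = (if even n then inl_pos (f (n div 2)) else inr_pos (g (n div 2)))" for n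
  have h [simp]: "h (inl_pos x) = inl_pos (f x)" "h (inr_pos x) = inr_pos (g x)" for x
    by (auto simp: h_def inl_pos_def inr_pos_def)
  have fx: "f x \<in> lp_car P'" if "x \<in> lp_car P" for x
    using f that by (rule bij_betw_apply)
  have gx: "g x \<in> lp_car Q'" if "x \<in> lp_car Q" for x
    using g that by (rule bij_betw_apply)
  show ?thesis
  proof (rule iso_lposetI[of h])
    have "inj_on f (lp_car P)" "inj_on g (lp_car Q)"
      using f g by (auto simp: bij_betw_def)
    then show "inj_on h (lp_car (disj_union b P Q))"
      by (intro inj_onI) (auto elim!: lp_car_disj_unionE dest: inj_onD)
    have "h ` lp_car (disj_union b P Q) = inl_pos ` f ` lp_car P \<union> inr_pos ` g ` lp_car Q"
      by (simp add: lp_car_disj_union image_Un image_image)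
    then show "h ` lp_car (disj_union b P Q) = lp_car (disj_union b P' Q')"
      using f g by (simp add: bij_betw_def lp_car_disj_union)
  next
    fix x y assume "x \<in> lp_car (disj_union b P Q)" "y \<in> lp_car (disj_union b P Q)"
    then show "(x, y) \<in> lp_ord (disj_union b P Q) \<longleftrightarrow> (h x, h y) \<in> lp_ord (disj_union b P' Q')"
      by (elim lp_car_disj_unionE) (simp_all add: ordf ordg fx gx)
  next
    fix x assume "x \<in> lp_car (disj_union b P Q)"
    then show "lp_lab (disj_union b P' Q') (h x) = lp_lab (disj_union b P Q) x"
      by (elim lp_car_disj_unionE) (simp_all add: labf labg)
  qed
qed

lemma pomset_of_disj_union_rep:
  assumes "wf_lposet P" "wf_lposet Q"
  shows "pomset_of (disj_union b (rep_lposet (pomset_of P)) (rep_lposet (pomset_of Q)))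
         = pomset_of (disj_union b P Q)"
proof -
  have "iso_lposet (rep_lposet (pomset_of R)) R" if "wf_lposet R" for R
    using that pomset_of_eq_iff[of "rep_lposet (pomset_of R)" R] by simp
  then have "iso_lposet (disj_union b (rep_lposet (pomset_of P)) (rep_lposet (pomset_of Q)))
      (disj_union b P Q)"
    using assms by (intro iso_disj_union)
  then show ?thesis
    using assms by (simp add: pomset_of_eq_iff wf_disj_union)
qed

lemma pom_seq_pomset_of:
  "wf_lposet P \<Longrightarrow> wf_lposet Q \<Longrightarrow> pom_seq (pomset_of P) (pomset_of Q) = pomset_of (disj_union True P Q)"
  unfolding pom_seq_def by (rule pomset_of_disj_union_rep)

lemma pom_par_pomset_of:
  "wf_lposet P \<Longrightarrow> wf_lposet Q \<Longrightarrow> pom_par (pomset_of P) (pomset_of Q) = pomset_of (disj_union False P Q)"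
  unfolding pom_par_def by (rule pomset_of_disj_union_rep)

definition empty_lposet :: "'a lposet" where
  "empty_lposet = ({}, {}, (\<lambda>_. undefined))"

lemma empty_lposet_simps [simp]:
  "lp_car empty_lposet = {}" "lp_ord empty_lposet = {}" "wf_lposet empty_lposet"
  by (auto simp: empty_lposet_def lp_car_def lp_ord_def wf_lposet_def)

lemma pom_one_eq: "pom_one = pomset_of empty_lposet"
  by (simp add: pom_one_def empty_lposet_def)

lemma iso_disj_union_empty_right: "iso_lposet (disj_union b P empty_lposet) P"
  by (rule iso_lposetI[of "\<lambda>n. n div 2"])
    (auto simp: lp_car_disj_union inj_on_def image_image elim!: lp_car_disj_unionE)

lemma iso_disj_union_empty_left: "iso_lposet (disj_union b empty_lposet P) P"
  by (rule iso_lposetI[of "\<lambda>n. n div 2"])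
    (auto simp: lp_car_disj_union inj_on_def image_image elim!: lp_car_disj_unionE)

definition swap_pos :: "nat \<Rightarrow> nat" where
  "swap_pos n = (if even n then n + 1 else n - 1)"

lemma swap_pos_simps [simp]: "swap_pos (inl_pos x) = inr_pos x" "swap_pos (inr_pos x) = inl_pos x"
  by (auto simp: swap_pos_def inl_pos_def inr_pos_def)

lemma iso_disj_union_swap: "iso_lposet (disj_union False P Q) (disj_union False Q P)"
proof (rule iso_lposetI[of swap_pos])
  show "inj_on swap_pos (lp_car (disj_union False P Q))"
    unfolding inj_on_def by (auto elim!: lp_car_disj_unionE)
  show "swap_pos ` lp_car (disj_union False P Q) = lp_car (disj_union False Q P)"
    by (auto simp: lp_car_disj_union image_Un image_image)
qed (auto elim!: lp_car_disj_unionE)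

definition assoc_pos :: "nat \<Rightarrow> nat" where
  "assoc_pos n = (if n mod 4 = 0 then n div 2 else if n mod 4 = 2 then n - 1 else 2 * n + 1)"

lemma assoc_pos_simps [simp]:
  "assoc_pos (inl_pos (inl_pos x)) = inl_pos x"
  "assoc_pos (inl_pos (inr_pos x)) = inr_pos (inl_pos x)"
  "assoc_pos (inr_pos x) = inr_pos (inr_pos x)"
  by (auto simp: assoc_pos_def inl_pos_def inr_pos_def) presburger+

lemma iso_disj_union_assoc:
  "iso_lposet (disj_union b (disj_union b P Q) R) (disj_union b P (disj_union b Q R))"
proof (rule iso_lposetI[of assoc_pos])
  show "inj_on assoc_pos (lp_car (disj_union b (disj_union b P Q) R))"
    unfolding inj_on_def by (auto elim!: lp_car_disj_unionE)
  show "assoc_pos ` lp_car (disj_union b (disj_union b P Q) R) = lp_car (disj_union b P (disj_union b Q R))"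
    by (auto simp: lp_car_disj_union image_Un image_image)
qed (auto elim!: lp_car_disj_unionE)

lemma pomset_of_eqI: "wf_lposet P \<Longrightarrow> iso_lposet P (rep_lposet U) \<Longrightarrow> pomset_of P = U"
  by (metis pomset_of_eq_iff pomset_of_rep_lposet wf_rep_lposet)

lemma pom_seq_one_right [simp]: "pom_seq U pom_one = U"
proof -
  have "pom_seq U pom_one = pomset_of (disj_union True (rep_lposet U) empty_lposet)"
    by (metis pom_one_eq pom_seq_pomset_of pomset_of_rep_lposet empty_lposet_simps(3) wf_rep_lposet)
  also have "\<dots> = U"
    by (rule pomset_of_eqI) (simp_all add: wf_disj_union iso_disj_union_empty_right)
  finally show ?thesis .
qed

lemma pom_seq_one_left [simp]: "pom_seq pom_one U = U"
proof -
  have "pom_seq pom_one U = pomset_of (disj_union True empty_lposet (rep_lposet U))"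
    by (metis pom_one_eq pom_seq_pomset_of pomset_of_rep_lposet empty_lposet_simps(3) wf_rep_lposet)
  also have "\<dots> = U"
    by (rule pomset_of_eqI) (simp_all add: wf_disj_union iso_disj_union_empty_left)
  finally show ?thesis .
qed

lemma pom_par_one_right [simp]: "pom_par U pom_one = U"
proof -
  have "pom_par U pom_one = pomset_of (disj_union False (rep_lposet U) empty_lposet)"
    by (metis pom_one_eq pom_par_pomset_of pomset_of_rep_lposet empty_lposet_simps(3) wf_rep_lposet)
  also have "\<dots> = U"
    by (rule pomset_of_eqI) (simp_all add: wf_disj_union iso_disj_union_empty_right)
  finally show ?thesis .
qed

lemma pom_par_commute: "pom_par U V = pom_par V U"
  unfolding pom_par_def by (simp add: pomset_of_eq_iff wf_disj_union iso_disj_union_swap)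

lemma pom_seq_assoc: "pom_seq (pom_seq U V) W = pom_seq U (pom_seq V W)"
proof -
  let ?P = "rep_lposet U" and ?Q = "rep_lposet V" and ?R = "rep_lposet W"
  have "pom_seq (pom_seq U V) W = pomset_of (disj_union True (disj_union True ?P ?Q) ?R)"
    by (metis pom_seq_def pom_seq_pomset_of pomset_of_rep_lposet wf_rep_lposet wf_disj_union)
  also have "\<dots> = pomset_of (disj_union True ?P (disj_union True ?Q ?R))"
    by (simp add: pomset_of_eq_iff wf_disj_union iso_disj_union_assoc)
  also have "\<dots> = pom_seq U (pom_seq V W)"
    by (metis pom_seq_def pom_seq_pomset_of pomset_of_rep_lposet wf_rep_lposet wf_disj_union)
  finally show ?thesis .
qed

lemma lang_seqI: "U \<in> L \<Longrightarrow> V \<in> M \<Longrightarrow> pom_seq U V \<in> lang_seq L M"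
  unfolding lang_seq_def by blast

lemma lang_seqE:
  assumes "X \<in> lang_seq L M"
  obtains U V where "X = pom_seq U V" "U \<in> L" "V \<in> M"
  using assms unfolding lang_seq_def by blast

lemma lang_parI: "U \<in> L \<Longrightarrow> V \<in> M \<Longrightarrow> pom_par U V \<in> lang_par L M"
  unfolding lang_par_def by blast

lemma lang_parE:
  assumes "X \<in> lang_par L M"
  obtains U V where "X = pom_par U V" "U \<in> L" "V \<in> M"
  using assms unfolding lang_par_def by blast

lemma lang_pow_add:
  "U \<in> lang_pow L n \<Longrightarrow> V \<in> lang_pow L m \<Longrightarrow> pom_seq U V \<in> lang_pow L (n + m)"
proof (induction n arbitrary: U)
  case 0
  then show ?case by simp
next
  case (Suc n)
  obtain W U' where U: "U = pom_seq W U'" "W \<in> L" "U' \<in> lang_pow L n"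
    using Suc.prems(1) by (auto elim: lang_seqE)
  have "pom_seq W (pom_seq U' V) \<in> lang_pow L (Suc n + m)"
    using Suc.IH[OF U(3) Suc.prems(2)] U(2) by (simp add: lang_seqI)
  then show ?case
    by (simp add: U(1) pom_seq_assoc)
qed

lemma lang_star_seq:
  assumes "U \<in> lang_star L" "V \<in> lang_star L"
  shows "pom_seq U V \<in> lang_star L"
proof -
  obtain n m where "U \<in> lang_pow L n" "V \<in> lang_pow L m"
    using assms unfolding lang_star_def by blast
  then have "pom_seq U V \<in> lang_pow L (n + m)"
    by (rule lang_pow_add)
  then show ?thesis
    unfolding lang_star_def by blast
qed

lemma pom_one_in_lang_star: "pom_one \<in> lang_star L"
  unfolding lang_star_def by (rule UN_I[of 0]) simp_all

lemma lang_subset_lang_star: "L \<subseteq> lang_star L"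
proof
  fix U assume "U \<in> L"
  then have "U \<in> lang_pow L 1"
    using lang_seqI[of U L pom_one "{pom_one}"] by simp
  then show "U \<in> lang_star L"
    unfolding lang_star_def by blast
qed

section \<open>Positions in an expression\<close>

fun child :: "'a sr_exp \<Rightarrow> nat \<Rightarrow> 'a sr_exp option" where
  "child (SPlus e f) k = (if k = 0 then Some e else if k = 1 then Some f else None)"
| "child (SSeq e f) k = (if k = 0 then Some e else if k = 1 then Some f else None)"
| "child (SPar e f) k = (if k = 0 then Some e else if k = 1 then Some f else None)"
| "child (SStar e) k = (if k = 0 then Some e else None)"
| "child _ k = None"

fun subexp_at :: "'a sr_exp \<Rightarrow> nat list \<Rightarrow> 'a sr_exp option" where
  "subexp_at e [] = Some e"
| "subexp_at e (k # p) = (case child e k of None \<Rightarrow> None | Some c \<Rightarrow> subexp_at c p)"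

lemma subexp_at_append:
  "subexp_at e (p @ q) = (case subexp_at e p of None \<Rightarrow> None | Some c \<Rightarrow> subexp_at c q)"
  by (induction p arbitrary: e) (auto split: option.split)

lemma subexp_at_snoc: "subexp_at e0 p = Some e \<Longrightarrow> subexp_at e0 (p @ [k]) = child e k"
  by (simp add: subexp_at_append split: option.split)

lemma child_size: "child e k = Some c \<Longrightarrow> size c < size e \<and> k \<le> 1"
  by (cases e) (auto split: if_splits)

lemma subexp_at_defined_bound: "subexp_at e p \<noteq> None \<Longrightarrow> length p \<le> size e \<and> set p \<subseteq> {0, 1}"
proof (induction p arbitrary: e)
  case Nil
  then show ?case by simp
next
  case (Cons k p)
  then obtain c where c: "child e k = Some c" "subexp_at c p \<noteq> None"
    by (auto split: option.splits)
  with Cons.IH[of c] child_size[OF c(1)] show ?case by auto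
qed

lemma finite_positions: "finite {p. subexp_at e p \<noteq> None}"
proof (rule finite_subset)
  show "{p. subexp_at e p \<noteq> None} \<subseteq> {xs. set xs \<subseteq> {0, 1} \<and> length xs \<le> size e}"
    using subexp_at_defined_bound by blast
  show "finite {xs. set xs \<subseteq> {0::nat, 1} \<and> length xs \<le> size e}"
    by (rule finite_lists_length_le) simp
qed

section \<open>The automaton of an expression\<close>

definition pos_state :: "nat list \<Rightarrow> nat \<Rightarrow> nat" where
  "pos_state p i = prod_encode (list_encode p, i)"

definition state_pos :: "nat \<Rightarrow> nat list" where
  "state_pos q = list_decode (fst (prod_decode q))"

definition state_tag :: "nat \<Rightarrow> nat" where
  "state_tag q = snd (prod_decode q)"

lemma state_pos_pos_state [simp]: "state_pos (pos_state p i) = p"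
  and state_tag_pos_state [simp]: "state_tag (pos_state p i) = i"
  by (simp_all add: state_pos_def state_tag_def pos_state_def)

lemma pos_state_state_pos_tag: "pos_state (state_pos q) (state_tag q) = q"
  by (simp add: state_pos_def state_tag_def pos_state_def)

lemma pos_state_eq_iff [simp]: "pos_state p i = pos_state p' j \<longleftrightarrow> p = p' \<and> i = j"
  by (metis state_pos_pos_state state_tag_pos_state)

fun final_tag :: "'a sr_exp \<Rightarrow> nat \<Rightarrow> bool" where
  "final_tag SZero i = False"
| "final_tag SOne i = (i = 0)"
| "final_tag (SSym a) i = (i = 1)"
| "final_tag (SPlus e f) i = (i = 1)"
| "final_tag (SSeq e f) i = (i = 2)"
| "final_tag (SPar e f) i = (i = 1)"
| "final_tag (SStar e) i = (i = 0)"

fun atom_trans :: "'a sr_exp option \<Rightarrow> nat list \<Rightarrow> nat \<Rightarrow> 'a \<Rightarrow> nat set" where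
  "atom_trans (Some (SSym b)) p i a = (if i = 0 \<and> a = b then {pos_state p 1} else {})"
| "atom_trans _ p i a = {}"

fun fork_trans :: "'a sr_exp option \<Rightarrow> nat list \<Rightarrow> nat \<Rightarrow> nat multiset \<Rightarrow> nat set" where
  "fork_trans (Some (SPlus e f)) p i \<phi> =
     (if i = 0 \<and> (\<phi> = {#pos_state (p @ [0]) 0#} \<or> \<phi> = {#pos_state (p @ [1]) 0#})
      then {pos_state p 1} else {})"
| "fork_trans (Some (SSeq e f)) p i \<phi> =
     (if i = 0 \<and> \<phi> = {#pos_state (p @ [0]) 0#} then {pos_state p 1}
      else if i = 1 \<and> \<phi> = {#pos_state (p @ [1]) 0#} then {pos_state p 2} else {})"
| "fork_trans (Some (SPar e f)) p i \<phi> =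
     (if i = 0 \<and> \<phi> = {#pos_state (p @ [0]) 0, pos_state (p @ [1]) 0#} then {pos_state p 1} else {})"
| "fork_trans (Some (SStar e)) p i \<phi> =
     (if i = 0 \<and> \<phi> = {#pos_state (p @ [0]) 0#} then {pos_state p 0} else {})"
| "fork_trans _ p i \<phi> = {}"

definition sr_automaton :: "'a sr_exp \<Rightarrow> (nat, 'a) pomset_automaton" where
  "sr_automaton e0 =
    \<lparr>states = {pos_state p i | p i. subexp_at e0 p \<noteq> None \<and> i < 3},
     accepting = {pos_state p i | p i e. subexp_at e0 p = Some e \<and> final_tag e i},
     delta = (\<lambda>q a. atom_trans (subexp_at e0 (state_pos q)) (state_pos q) (state_tag q) a),
     gamma = (\<lambda>q \<phi>. fork_trans (subexp_at e0 (state_pos q)) (state_pos q) (state_tag q) \<phi>)\<rparr>"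

lemma sr_automaton_simps [simp]:
  "delta (sr_automaton e0) (pos_state p i) a = atom_trans (subexp_at e0 p) p i a"
  "gamma (sr_automaton e0) (pos_state p i) \<phi> = fork_trans (subexp_at e0 p) p i \<phi>"
  "pos_state p i \<in> accepting (sr_automaton e0) \<longleftrightarrow> (\<exists>e. subexp_at e0 p = Some e \<and> final_tag e i)"
  "pos_state p i \<in> states (sr_automaton e0) \<longleftrightarrow> subexp_at e0 p \<noteq> None \<and> i < 3"
  by (auto simp: sr_automaton_def)

lemma sr_automaton_delta:
  "delta (sr_automaton e0) q a = atom_trans (subexp_at e0 (state_pos q)) (state_pos q) (state_tag q) a"
  by (simp add: sr_automaton_def)

lemma sr_automaton_gamma:
  "gamma (sr_automaton e0) q \<phi> = fork_trans (subexp_at e0 (state_pos q)) (state_pos q) (state_tag q) \<phi>"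
  by (simp add: sr_automaton_def)

lemma mem_states_sr_automaton:
  "q \<in> states (sr_automaton e0) \<longleftrightarrow> subexp_at e0 (state_pos q) \<noteq> None \<and> state_tag q < 3"
  by (metis sr_automaton_simps(4) pos_state_state_pos_tag)

lemma final_tag_less_3: "final_tag e i \<Longrightarrow> i < 3"
  by (cases e) auto

lemma atom_trans_target: "q \<in> atom_trans oe p i a \<Longrightarrow> oe \<noteq> None \<and> i = 0 \<and> q = pos_state p 1"
  by (cases "(oe, p, i, a)" rule: atom_trans.cases) (auto split: if_splits)

lemma fork_trans_target:
  "q \<in> fork_trans oe p i \<phi> \<Longrightarrow> oe \<noteq> None \<and> i < 3 \<and> (\<exists>j < 3. q = pos_state p j)"
  by (cases "(oe, p, i, \<phi>)" rule: fork_trans.cases) (auto split: if_splits)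

lemma fork_trans_forks_to_children:
  assumes "fork_trans (Some e) p i \<phi> \<noteq> {}" "r \<in># \<phi>"
  shows "\<exists>k c. r = pos_state (p @ [k]) 0 \<and> child e k = Some c"
proof -
  have "r = pos_state (p @ [0]) 0 \<and> child e 0 \<noteq> None \<or> r = pos_state (p @ [1]) 0 \<and> child e 1 \<noteq> None"
  proof (cases e)
    case (SPlus e1 e2)
    then show ?thesis using assms by (simp split: if_splits) auto
  next
    case (SSeq e1 e2)
    then show ?thesis using assms by (simp split: if_splits)
  next
    case (SPar e1 e2)
    then show ?thesis using assms by (simp split: if_splits)
  next
    case (SStar e1)
    then show ?thesis using assms by (simp split: if_splits)
  qed (use assms in simp_all)
  then show ?thesis by blast
qed

lemma fork_trans_finite: "finite {\<phi>. fork_trans oe p i \<phi> \<noteq> {}}"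
proof (rule finite_subset)
  show "{\<phi>. fork_trans oe p i \<phi> \<noteq> {}} \<subseteq>
    {{#pos_state (p @ [0]) 0#}, {#pos_state (p @ [1]) 0#}, {#pos_state (p @ [0]) 0, pos_state (p @ [1]) 0#}}"
  proof
    fix \<phi> assume "\<phi> \<in> {\<phi>. fork_trans oe p i \<phi> \<noteq> {}}"
    then show "\<phi> \<in> {{#pos_state (p @ [0]) 0#}, {#pos_state (p @ [1]) 0#}, {#pos_state (p @ [0]) 0, pos_state (p @ [1]) 0#}}"
      by (cases "(oe, p, i, \<phi>)" rule: fork_trans.cases) (simp_all split: if_splits, blast)
  qed
qed simp

lemma sr_automaton_fork_child:
  assumes "gamma (sr_automaton e0) q \<phi> \<noteq> {}" "r \<in># \<phi>"
  obtains k c where "r = pos_state (state_pos q @ [k]) 0" "subexp_at e0 (state_pos q @ [k]) = Some c"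
proof -
  obtain e where e: "subexp_at e0 (state_pos q) = Some e"
    using assms(1) by (cases "subexp_at e0 (state_pos q)") (auto simp: sr_automaton_gamma)
  then show ?thesis
    using fork_trans_forks_to_children[of e "state_pos q" "state_tag q" \<phi> r] assms
    by (auto simp: sr_automaton_gamma subexp_at_snoc intro: that)
qed

lemma wf_sr_automaton: "wf_pa (sr_automaton e0)"
  unfolding wf_pa_def
proof (intro conjI allI impI)
  show "accepting (sr_automaton e0) \<subseteq> states (sr_automaton e0)"
    by (auto simp: sr_automaton_def dest: final_tag_less_3)
next
  fix q a
  show "delta (sr_automaton e0) q a \<subseteq> states (sr_automaton e0)"
    by (auto simp: sr_automaton_delta mem_states_sr_automaton dest!: atom_trans_target)
  show "q \<notin> states (sr_automaton e0) \<Longrightarrow> delta (sr_automaton e0) q a = {}"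
    by (auto simp: sr_automaton_delta mem_states_sr_automaton dest!: atom_trans_target)
next
  fix q \<phi>
  show "gamma (sr_automaton e0) q \<phi> \<subseteq> states (sr_automaton e0)"
    by (auto simp: sr_automaton_gamma dest!: fork_trans_target)
  assume fork: "gamma (sr_automaton e0) q \<phi> \<noteq> {}"
  then show "q \<in> states (sr_automaton e0)"
    by (auto simp: sr_automaton_gamma mem_states_sr_automaton dest!: fork_trans_target)
  show "set_mset \<phi> \<subseteq> states (sr_automaton e0)"
    using sr_automaton_fork_child[OF fork] by force
next
  fix q
  show "finite {\<phi>. gamma (sr_automaton e0) q \<phi> \<noteq> {}}"
    by (simp add: sr_automaton_gamma fork_trans_finite)
qed

lemma finite_sr_automaton: "finite_pa (sr_automaton e0)"
proof -
  have "states (sr_automaton e0) = (\<lambda>(p, i). pos_state p i) ` ({p. subexp_at e0 p \<noteq> None} \<times> {..<3})"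
    by (auto simp: sr_automaton_def)
  then show ?thesis
    unfolding finite_pa_def
    by (metis finite_positions finite_imageI finite_cartesian_product finite_lessThan)
qed

lemma support_step_sr_automaton_depth:
  assumes "support_step (sr_automaton e0) q' q"
  shows "length (state_pos q) \<le> length (state_pos q')"
  using assms unfolding support_step_def
proof (elim disjE exE)
  fix a assume "q' \<in> delta (sr_automaton e0) q a"
  then show ?thesis by (auto simp: sr_automaton_delta dest!: atom_trans_target)
next
  fix \<phi> assume "q' \<in> gamma (sr_automaton e0) q \<phi>"
  then show ?thesis by (auto simp: sr_automaton_gamma dest!: fork_trans_target)
next
  fix \<phi> assume "q' \<in># \<phi> \<and> gamma (sr_automaton e0) q \<phi> \<noteq> {}"
  then obtain k where "q' = pos_state (state_pos q @ [k]) 0"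
    by (metis sr_automaton_fork_child)
  then show ?thesis by simp
qed

lemma supports_sr_automaton_depth:
  "supports (sr_automaton e0) q r \<Longrightarrow> length (state_pos r) \<le> length (state_pos q)"
  unfolding supports_def
proof (induction rule: rtranclp_induct)
  case base
  then show ?case by simp
next
  case (step y z)
  then show ?case using support_step_sr_automaton_depth[of e0 y z] by simp
qed

lemma fork_acyclic_sr_automaton: "fork_acyclic (sr_automaton e0)"
  unfolding fork_acyclic_def
proof (intro allI impI notI)
  fix q \<phi> r
  assume fork: "r \<in># \<phi> \<and> gamma (sr_automaton e0) q \<phi> \<noteq> {}" and "supports (sr_automaton e0) q r"
  then have "length (state_pos r) \<le> length (state_pos q)"
    by (rule_tac supports_sr_automaton_depth)
  moreover obtain k where "r = pos_state (state_pos q @ [k]) 0"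
    using fork by (metis sr_automaton_fork_child)
  ultimately show False by simp
qed

section \<open>The language of a position\<close>

lemma pom_par_list_singleton [simp]: "pom_par_list [U] = U"
  and pom_par_list_pair [simp]: "pom_par_list [U, V] = pom_par U V"
  by (simp_all add: pom_par_list_def)

lemma mset_map_fst_singleton: "mset (map fst xs) = {#r#} \<Longrightarrow> \<exists>U. xs = [(r, U)]"
  by (cases xs) auto

lemma mset_map_fst_pair:
  assumes "mset (map fst xs) = {#r, s#}"
  shows "\<exists>U V. xs = [(r, U), (s, V)] \<or> xs = [(s, V), (r, U)]"
proof -
  have "length xs = 2"
    using arg_cong[OF assms, of size] by simp
  then obtain x y where xs: "xs = [x, y]"
    by (auto simp: length_Suc_conv numeral_2_eq_2)
  then have "fst x = r \<and> fst y = s \<or> fst x = s \<and> fst y = r"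
    using assms by (auto simp: add_eq_conv_ex)
  then show ?thesis
    using xs by (cases x; cases y) auto
qed

lemma pom_par_list_fork_singleton:
  assumes "mset (map fst xs) = {#r#}" "\<forall>(q, U) \<in> set xs. U \<in> L q"
  shows "pom_par_list (map snd xs) \<in> L r"
  using assms mset_map_fst_singleton by fastforce

lemma pom_par_list_fork_pair:
  assumes "mset (map fst xs) = {#r, s#}" "\<forall>(q, U) \<in> set xs. U \<in> L q"
  shows "pom_par_list (map snd xs) \<in> lang_par (L r) (L s)"
  using mset_map_fst_pair[OF assms(1)] assms(2)
  by (auto intro: lang_parI simp: pom_par_commute)

lemma run_fork_singleton: "q' \<in> gamma A q {#r#} \<Longrightarrow> U \<in> lang_pa A r \<Longrightarrow> run A q U q'"
  using run_par[of q' A q "[(r, U)]"] by (auto simp: lang_pa_def)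

lemma run_fork_pair:
  "q' \<in> gamma A q {#r, s#} \<Longrightarrow> U \<in> lang_pa A r \<Longrightarrow> V \<in> lang_pa A s \<Longrightarrow> run A q (pom_par U V) q'"
  using run_par[of q' A q "[(r, U), (s, V)]"] by (auto simp: lang_pa_def)

lemma run_closed_induct:
  assumes "run A q U q'" "q \<in> B"
    and atom: "\<And>q a q'. q \<in> B \<Longrightarrow> q' \<in> delta A q a \<Longrightarrow> q' \<in> B \<and> R q (pom_atom a) q'"
    and fork: "\<And>q xs q'. q \<in> B \<Longrightarrow> q' \<in> gamma A q (mset (map fst xs)) \<Longrightarrow>
        \<forall>(r, V) \<in> set xs. V \<in> lang_pa A r \<Longrightarrow> q' \<in> B \<and> R q (pom_par_list (map snd xs)) q'"
    and one: "\<And>q. q \<in> B \<Longrightarrow> R q pom_one q"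
    and seq: "\<And>q U q' V q''. R q U q' \<Longrightarrow> R q' V q'' \<Longrightarrow> R q (pom_seq U V) q''"
  shows "q' \<in> B \<and> R q U q'"
  using assms(1,2)
proof (induction rule: run.induct)
  case (run_one q)
  then show ?case by (simp add: one)
next
  case (run_atom q' q a)
  then show ?case using atom by blast
next
  case (run_seq q U q'' V q')
  then show ?case by (blast intro: seq)
next
  case (run_par q' q xs)
  have "\<forall>(r, V) \<in> set xs. V \<in> lang_pa A r"
    using run_par.IH by (force simp: lang_pa_def)
  then show ?case
    using fork run_par.hyps(1) run_par.prems by blast
qed

lemma lang_pos_state_subset:
  assumes pos: "subexp_at e0 p = Some e"
    and one: "\<And>i. R i pom_one i"
    and seq: "\<And>i j k U V. R i U j \<Longrightarrow> R j V k \<Longrightarrow> R i (pom_seq U V) k"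
    and atom: "\<And>i a j. pos_state p j \<in> atom_trans (Some e) p i a \<Longrightarrow> R i (pom_atom a) j"
    and fork: "\<And>i xs j. pos_state p j \<in> fork_trans (Some e) p i (mset (map fst xs)) \<Longrightarrow>
        \<forall>(r, V) \<in> set xs. V \<in> lang_pa (sr_automaton e0) r \<Longrightarrow> R i (pom_par_list (map snd xs)) j"
    and final: "\<And>U j. R 0 U j \<Longrightarrow> final_tag e j \<Longrightarrow> U \<in> L"
  shows "lang_pa (sr_automaton e0) (pos_state p 0) \<subseteq> L"
proof
  fix U assume "U \<in> lang_pa (sr_automaton e0) (pos_state p 0)"
  then obtain q' where acc: "q' \<in> accepting (sr_automaton e0)"
    and run: "run (sr_automaton e0) (pos_state p 0) U q'"
    by (auto simp: lang_pa_def)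
  have "q' \<in> range (pos_state p) \<and> R (state_tag (pos_state p 0)) U (state_tag q')"
  proof (rule run_closed_induct[OF run, where R = "\<lambda>q U q'. R (state_tag q) U (state_tag q')"])
    fix q a q' assume "q \<in> range (pos_state p)" "q' \<in> delta (sr_automaton e0) q a"
    then obtain i where "q = pos_state p i" "q' \<in> atom_trans (Some e) p i a"
      using pos by auto
    moreover from this(2) have "q' = pos_state p 1"
      by (auto dest: atom_trans_target)
    ultimately show "q' \<in> range (pos_state p) \<and> R (state_tag q) (pom_atom a) (state_tag q')"
      using atom by auto
  next
    fix q xs q' assume "q \<in> range (pos_state p)" "q' \<in> gamma (sr_automaton e0) q (mset (map fst xs))"
      and calls: "\<forall>(r, V) \<in> set xs. V \<in> lang_pa (sr_automaton e0) r"
    then obtain i where "q = pos_state p i" "q' \<in> fork_trans (Some e) p i (mset (map fst xs))"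
      using pos by auto
    moreover from this(2) obtain j where "q' = pos_state p j"
      by (auto dest: fork_trans_target)
    ultimately show "q' \<in> range (pos_state p) \<and> R (state_tag q) (pom_par_list (map snd xs)) (state_tag q')"
      using fork calls by auto
  qed (auto intro: one seq)
  then obtain j where "q' = pos_state p j" "R 0 U j"
    by auto
  then show "U \<in> L"
    using acc pos final by simp
qed

lemma lang_pos_stateI:
  "subexp_at e0 p = Some e \<Longrightarrow> final_tag e j \<Longrightarrow> run (sr_automaton e0) (pos_state p 0) U (pos_state p j) \<Longrightarrow>
   U \<in> lang_pa (sr_automaton e0) (pos_state p 0)"
  unfolding lang_pa_def by force

lemma lang_pos_state_SZero:
  assumes pos: "subexp_at e0 p = Some SZero"
  shows "lang_pa (sr_automaton e0) (pos_state p 0) = {}"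
  using lang_pos_state_subset[OF pos, where R = "\<lambda>i U j. j = i \<and> U = pom_one" and L = "{}"]
  by auto

lemma lang_pos_state_SOne:
  assumes pos: "subexp_at e0 p = Some SOne"
  shows "lang_pa (sr_automaton e0) (pos_state p 0) = {pom_one}"
proof
  show "lang_pa (sr_automaton e0) (pos_state p 0) \<subseteq> {pom_one}"
    by (rule lang_pos_state_subset[OF pos, where R = "\<lambda>i U j. j = i \<and> U = pom_one"]) auto
  show "{pom_one} \<subseteq> lang_pa (sr_automaton e0) (pos_state p 0)"
    using lang_pos_stateI[OF pos, of 0 pom_one] run_one[of "sr_automaton e0" "pos_state p 0"] by simp
qed

lemma lang_pos_state_SSym:
  assumes pos: "subexp_at e0 p = Some (SSym a)"
  shows "lang_pa (sr_automaton e0) (pos_state p 0) = {pom_atom a}"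
proof
  show "lang_pa (sr_automaton e0) (pos_state p 0) \<subseteq> {pom_atom a}"
    by (rule lang_pos_state_subset[OF pos,
          where R = "\<lambda>i U j. (j = i \<and> U = pom_one) \<or> (i = 0 \<and> j = 1 \<and> U = pom_atom a)"])
      (auto split: if_splits)
  have "run (sr_automaton e0) (pos_state p 0) (pom_atom a) (pos_state p 1)"
    using pos by (intro run_atom) simp
  then show "{pom_atom a} \<subseteq> lang_pa (sr_automaton e0) (pos_state p 0)"
    using lang_pos_stateI[OF pos, of 1] by simp
qed

lemma lang_pos_state_SPlus:
  assumes pos: "subexp_at e0 p = Some (SPlus e1 e2)"
    and L1: "lang_pa (sr_automaton e0) (pos_state (p @ [0]) 0) = sem e1"
    and L2: "lang_pa (sr_automaton e0) (pos_state (p @ [1]) 0) = sem e2"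
  shows "lang_pa (sr_automaton e0) (pos_state p 0) = sem e1 \<union> sem e2"
proof
  let ?R = "\<lambda>i U j. (j = i \<and> U = pom_one) \<or> (i = 0 \<and> j = 1 \<and> U \<in> sem e1 \<union> sem e2)"
  show "lang_pa (sr_automaton e0) (pos_state p 0) \<subseteq> sem e1 \<union> sem e2"
  proof (rule lang_pos_state_subset[OF pos, where R = ?R])
    fix i xs j
    assume "pos_state p j \<in> fork_trans (Some (SPlus e1 e2)) p i (mset (map fst xs))"
      and "\<forall>(r, V) \<in> set xs. V \<in> lang_pa (sr_automaton e0) r"
    then show "?R i (pom_par_list (map snd xs)) j"
      using pom_par_list_fork_singleton[of xs _ "lang_pa (sr_automaton e0)"] L1 L2
      by (auto split: if_splits)
  qed auto
  show "sem e1 \<union> sem e2 \<subseteq> lang_pa (sr_automaton e0) (pos_state p 0)"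
  proof
    fix U assume "U \<in> sem e1 \<union> sem e2"
    then have "run (sr_automaton e0) (pos_state p 0) U (pos_state p 1)"
    proof
      assume "U \<in> sem e1"
      then show ?thesis
        using pos L1 by (intro run_fork_singleton[of _ _ _ "pos_state (p @ [0]) 0"]) simp_all
    next
      assume "U \<in> sem e2"
      then show ?thesis
        using pos L2 by (intro run_fork_singleton[of _ _ _ "pos_state (p @ [1]) 0"]) simp_all
    qed
    then show "U \<in> lang_pa (sr_automaton e0) (pos_state p 0)"
      using lang_pos_stateI[OF pos, of 1] by simp
  qed
qed

lemma lang_pos_state_SSeq:
  assumes pos: "subexp_at e0 p = Some (SSeq e1 e2)"
    and L1: "lang_pa (sr_automaton e0) (pos_state (p @ [0]) 0) = sem e1"
    and L2: "lang_pa (sr_automaton e0) (pos_state (p @ [1]) 0) = sem e2"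
  shows "lang_pa (sr_automaton e0) (pos_state p 0) = lang_seq (sem e1) (sem e2)"
proof
  let ?R = "\<lambda>i U j. (j = i \<and> U = pom_one) \<or> (i = 0 \<and> j = 1 \<and> U \<in> sem e1)
     \<or> (i = 1 \<and> j = 2 \<and> U \<in> sem e2) \<or> (i = 0 \<and> j = 2 \<and> U \<in> lang_seq (sem e1) (sem e2))"
  show "lang_pa (sr_automaton e0) (pos_state p 0) \<subseteq> lang_seq (sem e1) (sem e2)"
  proof (rule lang_pos_state_subset[OF pos, where R = ?R])
    fix i xs j
    assume "pos_state p j \<in> fork_trans (Some (SSeq e1 e2)) p i (mset (map fst xs))"
      and "\<forall>(r, V) \<in> set xs. V \<in> lang_pa (sr_automaton e0) r"
    then show "?R i (pom_par_list (map snd xs)) j"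
      using pom_par_list_fork_singleton[of xs _ "lang_pa (sr_automaton e0)"] L1 L2
      by (auto split: if_splits)
  qed (auto intro: lang_seqI)
  show "lang_seq (sem e1) (sem e2) \<subseteq> lang_pa (sr_automaton e0) (pos_state p 0)"
  proof
    fix X assume "X \<in> lang_seq (sem e1) (sem e2)"
    then obtain U V where X: "X = pom_seq U V" "U \<in> sem e1" "V \<in> sem e2"
      by (rule lang_seqE)
    have "run (sr_automaton e0) (pos_state p 0) U (pos_state p 1)"
      using pos L1 X(2) by (intro run_fork_singleton[of _ _ _ "pos_state (p @ [0]) 0"]) simp_all
    moreover have "run (sr_automaton e0) (pos_state p 1) V (pos_state p 2)"
      using pos L2 X(3) by (intro run_fork_singleton[of _ _ _ "pos_state (p @ [1]) 0"]) simp_all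
    ultimately have "run (sr_automaton e0) (pos_state p 0) X (pos_state p 2)"
      unfolding X(1) by (rule run_seq)
    then show "X \<in> lang_pa (sr_automaton e0) (pos_state p 0)"
      using lang_pos_stateI[OF pos, of 2] by simp
  qed
qed

lemma lang_pos_state_SPar:
  assumes pos: "subexp_at e0 p = Some (SPar e1 e2)"
    and L1: "lang_pa (sr_automaton e0) (pos_state (p @ [0]) 0) = sem e1"
    and L2: "lang_pa (sr_automaton e0) (pos_state (p @ [1]) 0) = sem e2"
  shows "lang_pa (sr_automaton e0) (pos_state p 0) = lang_par (sem e1) (sem e2)"
proof
  let ?R = "\<lambda>i U j. (j = i \<and> U = pom_one) \<or> (i = 0 \<and> j = 1 \<and> U \<in> lang_par (sem e1) (sem e2))"
  show "lang_pa (sr_automaton e0) (pos_state p 0) \<subseteq> lang_par (sem e1) (sem e2)"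
  proof (rule lang_pos_state_subset[OF pos, where R = ?R])
    fix i xs j
    assume "pos_state p j \<in> fork_trans (Some (SPar e1 e2)) p i (mset (map fst xs))"
      and calls: "\<forall>(r, V) \<in> set xs. V \<in> lang_pa (sr_automaton e0) r"
    then have "i = 0" "j = 1"
      and forks: "mset (map fst xs) = {#pos_state (p @ [0]) 0, pos_state (p @ [1]) 0#}"
      by (simp_all split: if_splits)
    then show "?R i (pom_par_list (map snd xs)) j"
      using pom_par_list_fork_pair[OF forks calls] L1 L2 by simp
  qed auto
  show "lang_par (sem e1) (sem e2) \<subseteq> lang_pa (sr_automaton e0) (pos_state p 0)"
  proof
    fix X assume "X \<in> lang_par (sem e1) (sem e2)"
    then obtain U V where X: "X = pom_par U V" "U \<in> sem e1" "V \<in> sem e2"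
      by (rule lang_parE)
    have "run (sr_automaton e0) (pos_state p 0) X (pos_state p 1)"
      unfolding X(1) using pos L1 L2 X(2,3)
      by (intro run_fork_pair[of _ _ _ "pos_state (p @ [0]) 0" "pos_state (p @ [1]) 0"]) simp_all
    then show "X \<in> lang_pa (sr_automaton e0) (pos_state p 0)"
      using lang_pos_stateI[OF pos, of 1] by simp
  qed
qed

lemma lang_pos_state_SStar:
  assumes pos: "subexp_at e0 p = Some (SStar e1)"
    and L1: "lang_pa (sr_automaton e0) (pos_state (p @ [0]) 0) = sem e1"
  shows "lang_pa (sr_automaton e0) (pos_state p 0) = lang_star (sem e1)"
proof
  show "lang_pa (sr_automaton e0) (pos_state p 0) \<subseteq> lang_star (sem e1)"
  proof (rule lang_pos_state_subset[OF pos, where R = "\<lambda>i U j. j = i \<and> U \<in> lang_star (sem e1)"])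
    fix i xs j
    assume "pos_state p j \<in> fork_trans (Some (SStar e1)) p i (mset (map fst xs))"
      and calls: "\<forall>(r, V) \<in> set xs. V \<in> lang_pa (sr_automaton e0) r"
    then have "j = i" and forks: "mset (map fst xs) = {#pos_state (p @ [0]) 0#}"
      by (simp_all split: if_splits)
    then show "j = i \<and> pom_par_list (map snd xs) \<in> lang_star (sem e1)"
      using pom_par_list_fork_singleton[OF forks calls] L1 lang_subset_lang_star by auto
  qed (simp_all add: pom_one_in_lang_star lang_star_seq)
  show "lang_star (sem e1) \<subseteq> lang_pa (sr_automaton e0) (pos_state p 0)"
  proof
    fix X assume "X \<in> lang_star (sem e1)"
    then obtain n where "X \<in> lang_pow (sem e1) n"
      unfolding lang_star_def by blast
    then have "run (sr_automaton e0) (pos_state p 0) X (pos_state p 0)"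
    proof (induction n arbitrary: X)
      case 0
      then show ?case by (simp add: run_one)
    next
      case (Suc n)
      then obtain U V where X: "X = pom_seq U V" "U \<in> sem e1" "V \<in> lang_pow (sem e1) n"
        by (auto elim: lang_seqE)
      have "run (sr_automaton e0) (pos_state p 0) U (pos_state p 0)"
        using pos L1 X(2) by (intro run_fork_singleton[of _ _ _ "pos_state (p @ [0]) 0"]) simp_all
      then show ?case
        unfolding X(1) using Suc.IH[OF X(3)] by (rule run_seq)
    qed
    then show "X \<in> lang_pa (sr_automaton e0) (pos_state p 0)"
      using lang_pos_stateI[OF pos, of 0] by simp
  qed
qed

lemma lang_pos_state: "subexp_at e0 p = Some e \<Longrightarrow> lang_pa (sr_automaton e0) (pos_state p 0) = sem e"
proof (induction e arbitrary: p)
  case SZero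
  then show ?case by (simp add: lang_pos_state_SZero)
next
  case SOne
  then show ?case by (simp add: lang_pos_state_SOne)
next
  case (SSym a)
  then show ?case by (simp add: lang_pos_state_SSym)
next
  case (SPlus e1 e2)
  then show ?case by (simp add: lang_pos_state_SPlus subexp_at_snoc)
next
  case (SSeq e1 e2)
  then show ?case by (simp add: lang_pos_state_SSeq subexp_at_snoc)
next
  case (SPar e1 e2)
  then show ?case by (simp add: lang_pos_state_SPar subexp_at_snoc)
next
  case (SStar e1)
  then show ?case by (simp add: lang_pos_state_SStar subexp_at_snoc)
qed

theorem theorem7p16:
  fixes e :: "'a::finite sr_exp"
  shows "\<exists>(A :: (nat, 'a) pomset_automaton) q.
           wf_pa A \<and> finite_pa A \<and> fork_acyclic A \<and> q \<in> states A \<and> lang_pa A q = sem e"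
proof (intro exI conjI)
  show "wf_pa (sr_automaton e)" by (rule wf_sr_automaton)
  show "finite_pa (sr_automaton e)" by (rule finite_sr_automaton)
  show "fork_acyclic (sr_automaton e)" by (rule fork_acyclic_sr_automaton)
  show "pos_state [] 0 \<in> states (sr_automaton e)" by simp
  show "lang_pa (sr_automaton e) (pos_state [] 0) = sem e" by (rule lang_pos_state) simp
qed

end
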